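(* Let $\lambda$ be a pre-specified threshold, and let $\Pi^*_\lambda$ denote the set of solutions of the constrained problem $$\max_{\pi}\ R(\pi)\quad\text{subject to}\quad \mathrm{THR}(\pi)\le \lambda ,$$ where the maximum is over all individualized treatment rules $\pi:\mathcal X\to\{0,1\}$. (a) If $\lambda<\mathbb{E}[\mathrm{THR}(X)\cdot \mathbb{I}\{\tau(X)>0\}]$, then the oracle rule is $$\pi^*_\lambda(x)=\mathbb{I}\{\tau(x)-\beta^*\,\mathrm{THR}(x)>0\},$$ where $\beta^*$ satisfies $$\mathbb{E}\big[\mathrm{THR}(X)\cdot \mathbb{I}\{\tau(X)-\beta^*\,\mathrm{THR}(X)>0\}\big]=\lambda .$$ That is, this rule belongs to $\Pi^*_\lambda$. (b) If $\lambda\ge \mathbb{E}[\mathrm{THR}(X)\cdot \mathbb{I}\{\tau(X)>0\}]$, then the oracle rule is $\pi^*_\lambda(x)=\mathbb{I}\{\tau(x)>0\}$. This is the same rule that maximizes $R(\pi)$ when no harm constraint is imposed.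
   Context: We work in the potential outcomes framework with a superpopulation of random tuples $\{X,A,Y(1),Y(0)\}$. Here $X\in\mathcal X$ are pre-treatment covariates, $A\in\{0,1\}$ is a binary treatment, and $Y(a)\in\{0,1\}$ is the binary potential outcome under treatment $a$; the value $1$ is the favorable outcome. Notation: - Conditional average treatment effect: $\tau(x)=\mathbb{E}\{Y(1)-Y(0)\mid X=x\}$. - Conditional treatment harm rate: $\mathrm{THR}(x)=\mathbb{P}(Y(0)=1,Y(1)=0\mid X=x)$. - An individualized treatment rule (ITR) is any map $\pi:\mathcal X\to\{0,1\}$. - Reward of an ITR: $R(\pi)=\mathbb{E}[\pi(X)Y(1)+\{1-\pi(X)\}Y(0)]$. - Harm rate of an ITR: $\mathrm{THR}(\pi)=\mathbb{E}\{\mathrm{THR}(X)\pi(X)\}$. *)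

theory Defs
  imports "HOL-Probability.Probability"
begin

text \<open>Model. M is the distribution of the covariates X on the space 'x.
  K x is the conditional joint law of the pair (Y(0), Y(1)) given X = x,
  with outcomes in bool (True = 1 = favourable).\<close>

definition cate :: "('x \<Rightarrow> (bool \<times> bool) pmf) \<Rightarrow> 'x \<Rightarrow> real" where
  "cate K x = measure_pmf.expectation (K x) (\<lambda>(y0, y1). of_bool y1 - of_bool y0)"

definition cthr :: "('x \<Rightarrow> (bool \<times> bool) pmf) \<Rightarrow> 'x \<Rightarrow> real" where
  "cthr K x = measure_pmf.prob (K x) {(True, False)}"

definition itrs :: "'x measure \<Rightarrow> ('x \<Rightarrow> bool) set" where
  "itrs M = measurable M (count_space UNIV)"

definition reward :: "'x measure \<Rightarrow> ('x \<Rightarrow> (bool \<times> bool) pmf) \<Rightarrow> ('x \<Rightarrow> bool) \<Rightarrow> real" where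
  "reward M K \<pi> = (\<integral>x. measure_pmf.expectation (K x)
      (\<lambda>(y0, y1). of_bool (\<pi> x) * of_bool y1 + (1 - of_bool (\<pi> x)) * of_bool y0) \<partial>M)"

definition harm :: "'x measure \<Rightarrow> ('x \<Rightarrow> (bool \<times> bool) pmf) \<Rightarrow> ('x \<Rightarrow> bool) \<Rightarrow> real" where
  "harm M K \<pi> = (\<integral>x. cthr K x * of_bool (\<pi> x) \<partial>M)"

definition opt_set :: "'x measure \<Rightarrow> ('x \<Rightarrow> (bool \<times> bool) pmf) \<Rightarrow> real \<Rightarrow> ('x \<Rightarrow> bool) set" where
  "opt_set M K lam = {\<pi> \<in> itrs M. harm M K \<pi> \<le> lam \<and>
      (\<forall>\<pi>' \<in> itrs M. harm M K \<pi>' \<le> lam \<longrightarrow> reward M K \<pi>' \<le> reward M K \<pi>)}"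

end

theory Submission
  imports Defs
begin

text \<open>Pointwise, the reward of a rule is the never-treat reward plus the integral of
  \<open>\<pi>(x) \<tau>(x)\<close>, so \<open>R(\<pi>) - \<beta> THR(\<pi>)\<close> differs by a constant from the integral of
  \<open>\<pi>(x) (\<tau>(x) - \<beta> THR(x))\<close>. This Lagrangian is maximised by treating exactly where the
  integrand is positive. For \<open>\<beta> \<ge> 0\<close> and a threshold rule whose harm equals \<open>\<lambda>\<close> (or
  \<open>\<beta> = 0\<close> and harm at most \<open>\<lambda>\<close>), weak duality turns Lagrangian optimality into
  optimality under the harm constraint. In case (a), \<open>\<beta> \<ge> 0\<close> is forced: the harm of the
  threshold rule decreases in \<open>\<beta>\<close>, and at \<open>\<beta> = 0\<close> it already exceeds \<open>\<lambda>\<close>.\<close>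

lemma integral_of_bool_mult_le_positive_part:
  fixes g :: "'a \<Rightarrow> real"
  assumes "integrable M g" and "Measurable.pred M P"
  shows "(\<integral>x. of_bool (P x) * g x \<partial>M) \<le> (\<integral>x. of_bool (g x > 0) * g x \<partial>M)"
proof (rule integral_mono)
  show "integrable M (\<lambda>x. of_bool (P x) * g x)"
    by (rule Bochner_Integration.integrable_bound[OF assms(1)]) (use assms in auto)
  show "integrable M (\<lambda>x. of_bool (g x > 0) * g x)"
    by (rule Bochner_Integration.integrable_bound[OF assms(1)]) (use assms in auto)
qed auto

lemma expectation_pmf_bool_pair:
  fixes f :: "bool \<times> bool \<Rightarrow> real"
  shows "measure_pmf.expectation p f =
    pmf p (False, False) * f (False, False) + pmf p (False, True) * f (False, True)
    + pmf p (True, False) * f (True, False) + pmf p (True, True) * f (True, True)"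
proof -
  have "measure_pmf.expectation p f = (\<Sum>ab\<in>UNIV. pmf p ab *\<^sub>R f ab)"
    by (rule integral_measure_pmf) auto
  then show ?thesis
    by (simp add: UNIV_Times_UNIV[symmetric] UNIV_bool algebra_simps)
qed

lemma cate_eq: "cate K x = pmf (K x) (False, True) - pmf (K x) (True, False)"
  unfolding cate_def by (simp add: expectation_pmf_bool_pair)

lemma cthr_eq: "cthr K x = pmf (K x) (True, False)"
  unfolding cthr_def by (simp add: measure_pmf_single)

lemma abs_cate_le_1: "\<bar>cate K x\<bar> \<le> 1"
  unfolding cate_eq using pmf_le_1[of "K x"] pmf_nonneg[of "K x"] by (smt (verit))

lemma cthr_nonneg: "0 \<le> cthr K x"
  by (simp add: cthr_eq)

lemma cthr_le_1: "cthr K x \<le> 1"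
  by (simp add: cthr_eq pmf_le_1)

lemma expectation_reward_eq:
  "measure_pmf.expectation (K x)
      (\<lambda>(y0, y1). of_bool t * of_bool y1 + (1 - of_bool t) * of_bool y0)
   = pmf (K x) (True, False) + pmf (K x) (True, True) + of_bool t * cate K x"
  by (simp add: expectation_pmf_bool_pair cate_eq algebra_simps)

definition threshold_rule :: "('x \<Rightarrow> (bool \<times> bool) pmf) \<Rightarrow> real \<Rightarrow> 'x \<Rightarrow> bool" where
  "threshold_rule K \<beta> = (\<lambda>x. cate K x - \<beta> * cthr K x > 0)"

lemma threshold_rule_0: "threshold_rule K 0 = (\<lambda>x. cate K x > 0)"
  by (simp add: threshold_rule_def)

locale potential_outcomes = prob_space M for M :: "'x measure" +
  fixes K :: "'x \<Rightarrow> (bool \<times> bool) pmf"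
  assumes measurable_pmf_K: "\<And>ab. (\<lambda>x. pmf (K x) ab) \<in> borel_measurable M"
begin

lemma measurable_cate[measurable]: "cate K \<in> borel_measurable M"
  unfolding cate_eq[abs_def] using measurable_pmf_K by measurable

lemma measurable_cthr[measurable]: "cthr K \<in> borel_measurable M"
  unfolding cthr_eq[abs_def] using measurable_pmf_K by measurable

lemma integrable_bounded:
  fixes f :: "'x \<Rightarrow> real"
  assumes "f \<in> borel_measurable M" and "\<And>x. \<bar>f x\<bar> \<le> B"
  shows "integrable M f"
  using assms by (intro integrable_const_bound[where B = B]) auto

lemma integrable_cate: "integrable M (cate K)"
  by (rule integrable_bounded[OF measurable_cate abs_cate_le_1])

lemma integrable_cthr: "integrable M (cthr K)"
  by (rule integrable_bounded[where B = 1]) (auto simp: abs_le_iff cthr_le_1 cthr_nonneg)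

lemma integrable_of_bool_mult:
  fixes f :: "'x \<Rightarrow> real"
  assumes "integrable M f" and "\<pi> \<in> itrs M"
  shows "integrable M (\<lambda>x. of_bool (\<pi> x) * f x)"
  by (rule Bochner_Integration.integrable_bound[OF assms(1)]) (use assms in \<open>auto simp: itrs_def\<close>)

lemma threshold_rule_in_itrs: "threshold_rule K \<beta> \<in> itrs M"
  unfolding itrs_def threshold_rule_def by measurable

lemma reward_eq:
  assumes "\<pi> \<in> itrs M"
  shows "reward M K \<pi> = reward M K (\<lambda>_. False) + (\<integral>x. of_bool (\<pi> x) * cate K x \<partial>M)"
proof -
  have "integrable M (\<lambda>x. pmf (K x) (True, False) + pmf (K x) (True, True))"
  proof (rule integrable_bounded[where B = 2])
    show "\<bar>pmf (K x) (True, False) + pmf (K x) (True, True)\<bar> \<le> 2" for x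
      using pmf_le_1[of "K x" "(True, False)"] pmf_le_1[of "K x" "(True, True)"] by simp
  qed (use measurable_pmf_K in simp)
  then show ?thesis
    unfolding reward_def expectation_reward_eq
    using assms integrable_cate integrable_of_bool_mult by simp
qed

lemma lagrangian_eq:
  assumes "\<pi> \<in> itrs M"
  shows "reward M K \<pi> - \<beta> * harm M K \<pi> =
    reward M K (\<lambda>_. False) + (\<integral>x. of_bool (\<pi> x) * (cate K x - \<beta> * cthr K x) \<partial>M)"
proof -
  have "(\<integral>x. of_bool (\<pi> x) * (cate K x - \<beta> * cthr K x) \<partial>M)
      = (\<integral>x. of_bool (\<pi> x) * cate K x - \<beta> * (of_bool (\<pi> x) * cthr K x) \<partial>M)"
    by (simp add: algebra_simps)
  also have "\<dots> = (\<integral>x. of_bool (\<pi> x) * cate K x \<partial>M) - \<beta> * harm M K \<pi>"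
    using assms integrable_cate integrable_cthr integrable_of_bool_mult
    by (simp add: harm_def mult.commute)
  finally show ?thesis
    using reward_eq[OF assms] by simp
qed

lemma threshold_rule_maximizes_lagrangian:
  assumes "\<pi> \<in> itrs M"
  shows "reward M K \<pi> - \<beta> * harm M K \<pi>
    \<le> reward M K (threshold_rule K \<beta>) - \<beta> * harm M K (threshold_rule K \<beta>)"
proof -
  have "integrable M (\<lambda>x. cate K x - \<beta> * cthr K x)"
    using integrable_cate integrable_cthr by simp
  then have "(\<integral>x. of_bool (\<pi> x) * (cate K x - \<beta> * cthr K x) \<partial>M)
      \<le> (\<integral>x. of_bool (threshold_rule K \<beta> x) * (cate K x - \<beta> * cthr K x) \<partial>M)"
    using integral_of_bool_mult_le_positive_part assms
    unfolding threshold_rule_def itrs_def pred_def by blast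
  then show ?thesis
    using lagrangian_eq[OF assms] lagrangian_eq[OF threshold_rule_in_itrs] by simp
qed

lemma harm_threshold_rule_antimono:
  assumes "\<beta> \<le> \<beta>'"
  shows "harm M K (threshold_rule K \<beta>') \<le> harm M K (threshold_rule K \<beta>)"
proof -
  have integrable: "integrable M (\<lambda>x. cthr K x * of_bool (threshold_rule K \<gamma> x))" for \<gamma>
    using integrable_of_bool_mult[OF integrable_cthr threshold_rule_in_itrs]
    by (simp add: mult.commute)
  show ?thesis
    unfolding harm_def
  proof (rule integral_mono[OF integrable integrable])
    fix x
    have "\<beta> * cthr K x \<le> \<beta>' * cthr K x"
      using assms cthr_nonneg by (rule mult_right_mono)
    then show "cthr K x * of_bool (threshold_rule K \<beta>' x) \<le> cthr K x * of_bool (threshold_rule K \<beta> x)"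
      using cthr_nonneg[of K x] by (auto simp: threshold_rule_def)
  qed
qed

lemma threshold_rule_in_opt_set:
  assumes "0 \<le> \<beta>" and "harm M K (threshold_rule K \<beta>) \<le> lam"
    and "\<beta> * (lam - harm M K (threshold_rule K \<beta>)) = 0"
  shows "threshold_rule K \<beta> \<in> opt_set M K lam"
  unfolding opt_set_def
proof (intro CollectI conjI ballI impI threshold_rule_in_itrs assms(2))
  fix \<pi> assume "\<pi> \<in> itrs M" and "harm M K \<pi> \<le> lam"
  then have "reward M K \<pi> \<le> reward M K \<pi> + \<beta> * (lam - harm M K \<pi>)"
    using assms(1) by simp
  also have "\<dots> \<le> reward M K (threshold_rule K \<beta>) + \<beta> * (lam - harm M K (threshold_rule K \<beta>))"
    using threshold_rule_maximizes_lagrangian[OF \<open>\<pi> \<in> itrs M\<close>, of \<beta>]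
    by (simp add: algebra_simps)
  finally show "reward M K \<pi> \<le> reward M K (threshold_rule K \<beta>)"
    using assms(3) by simp
qed

end

theorem theorem1:
  fixes M :: "'x measure" and K :: "'x \<Rightarrow> (bool \<times> bool) pmf" and lam :: real
  assumes "prob_space M"
    and "\<And>ab. (\<lambda>x. pmf (K x) ab) \<in> borel_measurable M"
  shows "(lam < (\<integral>x. cthr K x * of_bool (cate K x > 0) \<partial>M) \<longrightarrow>
            (\<forall>\<beta>::real. (\<integral>x. cthr K x * of_bool (cate K x - \<beta> * cthr K x > 0) \<partial>M) = lam \<longrightarrow>
               (\<lambda>x. cate K x - \<beta> * cthr K x > 0) \<in> opt_set M K lam))
       \<and> (lam \<ge> (\<integral>x. cthr K x * of_bool (cate K x > 0) \<partial>M) \<longrightarrow>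
            (\<lambda>x. cate K x > 0) \<in> opt_set M K lam \<and>
            (\<forall>\<pi> \<in> itrs M. reward M K \<pi> \<le> reward M K (\<lambda>x. cate K x > 0)))"
proof -
  interpret potential_outcomes M K
    using assms by (simp add: potential_outcomes_def potential_outcomes_axioms_def)
  have harm_0: "(\<integral>x. cthr K x * of_bool (cate K x > 0) \<partial>M) = harm M K (threshold_rule K 0)"
    by (simp add: harm_def threshold_rule_0)
  have binding_constraint: "threshold_rule K \<beta> \<in> opt_set M K lam"
    if "lam < harm M K (threshold_rule K 0)" and "harm M K (threshold_rule K \<beta>) = lam" for \<beta>
  proof (rule threshold_rule_in_opt_set)
    show "0 \<le> \<beta>"
      using harm_threshold_rule_antimono[of \<beta> 0] that by fastforce
  qed (use that in simp_all)
  have slack_constraint: "threshold_rule K 0 \<in> opt_set M K lam" if "harm M K (threshold_rule K 0) \<le> lam"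
    using that by (intro threshold_rule_in_opt_set) simp_all
  show ?thesis
    using binding_constraint slack_constraint threshold_rule_maximizes_lagrangian[of _ 0]
    unfolding harm_0 by (simp add: harm_def threshold_rule_def)
qed

end
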